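(* Let $k=0$ and let $a$ be a regular scale factor which is an even function on $\mathbb R$, such that either $\infty>\dot a(0^+)>0$, or $\dot a(0)=0$ but the $n$th derivative $a^{(n)}(0)\ne0$ for some $n$. Then $g_{\theta\theta}(\tau,\rho)$ and $g_{\phi\phi}(\tau,\rho,\theta)$ are continuous on $D_{\mathrm{polar}}$ (with values at $\rho=\rho_{\mathcal M_\tau}$ defined as limits as $t_0\to0$) and vanish at $(\tau,\rho_{\mathcal M_\tau})$ for every $\tau>0$.
   Context: A function $a:[0,\infty)\to[0,\infty)$ is a regular scale factor if: (a) $a(0)=0$; (b) $a$ is increasing and continuous on $[0,\infty)$, twice continuously differentiable on $(0,\infty)$, with an inverse function on $[0,\infty)$; (c) $\frac{a(t)\ddot a(t)}{\dot a(t)^2}\le1$ for all $t>0$ (presupposing $\dot a(t)\ne0$). Here $a$ is regarded on $\mathbb R$ via $a(-t)=a(t)$; $\dot a(0^+)=\lim_{t\to0^+}\dot a(t)$. For $0<s<\tau$, $\chi_s(\tau)=\int_s^\tau\frac{1}{a(t)}\frac{a(\tau)}{\sqrt{a^2(\tau)-a^2(t)}}dt$. For $\tau>0$, $\rho_{\mathcal M_\tau}=\int_0^\tau\frac{a(t)}{\sqrt{a^2(\tau)-a^2(t)}}dt$; for $0<\rho<2\rho_{\mathcal M_\tau}$, $t_0(\tau,\rho)$ is the unique $t_0\in(-\tau,\tau)$ with $\rho=\int_{t_0}^\tau\frac{a(t)}{\sqrt{a^2(\tau)-a^2(t)}}dt$. Define $f(\tau,t_0)=\int_{t_0}^{\tau}\frac{\ddot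 a(t)}{\dot a(t)^2}\left(\frac{\sqrt{a^2(\tau)-a^2(t_0)}}{\sqrt{a^2(\tau)-a^2(t)}}-1\right)dt$ for $0\le t_0<\tau$, $f(\tau,t_0)=2f(\tau,0)-f(\tau,-t_0)$ for $-\tau<t_0<0$, and $g_{\tau\tau}(\tau,\rho)=-[1-\dot a(\tau)f(\tau,t_0(\tau,\rho))]^2$. Let $\rho_{\max}(\tau)=\inf\{\rho\in(0,2\rho_{\mathcal M_\tau}):g_{\tau\tau}(\tau,\rho)=0\}$ if nonempty, else $2\rho_{\mathcal M_\tau}$. $D_{\mathrm{polar}}=\{(\tau,\rho,\theta,\phi):\tau>0,\ 0<\rho<\rho_{\max}(\tau),\ \theta\in I_\pi,\ \phi\in I_{2\pi}\}$ with $I_\pi,I_{2\pi}$ open intervals of lengths $\pi,2\pi$. For $t_0=t_0(\tau,\rho)\ne0$: $g_{\theta\theta}(\tau,\rho)=a^2(t_0)\chi_{|t_0|}(\tau)^2$ and $g_{\phi\phi}(\tau,\rho,\theta)=g_{\theta\theta}(\tau,\rho)\sin^2\theta$. *)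

theory Defs
  imports "HOL-Analysis.Analysis"
begin

text \<open>Scale factor a is a function on the reals; the paper's convention a(-t) = a(t)
  is imposed as a hypothesis of the theorem. Derivatives for t > 0 are taken via deriv.\<close>

definition regular_scale_factor :: "(real \<Rightarrow> real) \<Rightarrow> bool" where
  "regular_scale_factor a \<longleftrightarrow>
     a 0 = 0 \<and>
     strict_mono_on {0..} a \<and>
     continuous_on {0..} a \<and>
     bij_betw a {0..} {0..} \<and>
     (\<exists>a' a''. (\<forall>t>0. (a has_real_derivative a' t) (at t) \<and>
                          (a' has_real_derivative a'' t) (at t)) \<and>
                continuous_on {0<..} a'') \<and>
     (\<forall>t>0. deriv a t \<noteq> 0 \<and>
            a t * deriv (deriv a) t / (deriv a t)\<^sup>2 \<le> 1)"

definition chi :: "(real \<Rightarrow> real) \<Rightarrow> real \<Rightarrow> real \<Rightarrow> real" where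
  "chi a s \<tau> = integral {s..\<tau>} (\<lambda>t. 1 / a t * (a \<tau> / sqrt ((a \<tau>)\<^sup>2 - (a t)\<^sup>2)))"

definition rhoM :: "(real \<Rightarrow> real) \<Rightarrow> real \<Rightarrow> real" where
  "rhoM a \<tau> = integral {0..\<tau>} (\<lambda>t. a t / sqrt ((a \<tau>)\<^sup>2 - (a t)\<^sup>2))"

definition t0 :: "(real \<Rightarrow> real) \<Rightarrow> real \<Rightarrow> real \<Rightarrow> real" where
  "t0 a \<tau> \<rho> = (THE s. -\<tau> < s \<and> s < \<tau> \<and>
       \<rho> = integral {s..\<tau>} (\<lambda>t. a t / sqrt ((a \<tau>)\<^sup>2 - (a t)\<^sup>2)))"

definition f_pos :: "(real \<Rightarrow> real) \<Rightarrow> real \<Rightarrow> real \<Rightarrow> real" where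
  "f_pos a \<tau> s = integral {s..\<tau>} (\<lambda>t. deriv (deriv a) t / (deriv a t)\<^sup>2 *
       (sqrt ((a \<tau>)\<^sup>2 - (a s)\<^sup>2) / sqrt ((a \<tau>)\<^sup>2 - (a t)\<^sup>2) - 1))"

definition f_fun :: "(real \<Rightarrow> real) \<Rightarrow> real \<Rightarrow> real \<Rightarrow> real" where
  "f_fun a \<tau> s = (if 0 \<le> s then f_pos a \<tau> s else 2 * f_pos a \<tau> 0 - f_pos a \<tau> (-s))"

definition g_tautau :: "(real \<Rightarrow> real) \<Rightarrow> real \<Rightarrow> real \<Rightarrow> real" where
  "g_tautau a \<tau> \<rho> = - (1 - deriv a \<tau> * f_fun a \<tau> (t0 a \<tau> \<rho>))\<^sup>2"

definition rho_max :: "(real \<Rightarrow> real) \<Rightarrow> real \<Rightarrow> real" where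
  "rho_max a \<tau> = (let S = {\<rho>. 0 < \<rho> \<and> \<rho> < 2 * rhoM a \<tau> \<and> g_tautau a \<tau> \<rho> = 0}
                   in if S \<noteq> {} then Inf S else 2 * rhoM a \<tau>)"

definition D_polar :: "(real \<Rightarrow> real) \<Rightarrow> real \<Rightarrow> real \<Rightarrow> (real \<times> real \<times> real \<times> real) set" where
  "D_polar a \<theta>0 \<phi>0 = {(\<tau>, \<rho>, \<theta>, \<phi>). 0 < \<tau> \<and> 0 < \<rho> \<and> \<rho> < rho_max a \<tau> \<and>
       \<theta>0 < \<theta> \<and> \<theta> < \<theta>0 + pi \<and> \<phi>0 < \<phi> \<and> \<phi> < \<phi>0 + 2 * pi}"

definition g_thth :: "(real \<Rightarrow> real) \<Rightarrow> real \<Rightarrow> real \<Rightarrow> real" where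
  "g_thth a \<tau> \<rho> = (let s = t0 a \<tau> \<rho> in
     if s \<noteq> 0 then (a s)\<^sup>2 * (chi a \<bar>s\<bar> \<tau>)\<^sup>2
     else Lim (at 0) (\<lambda>u. (a u)\<^sup>2 * (chi a \<bar>u\<bar> \<tau>)\<^sup>2))"

definition g_phph :: "(real \<Rightarrow> real) \<Rightarrow> real \<Rightarrow> real \<Rightarrow> real \<Rightarrow> real" where
  "g_phph a \<tau> \<rho> \<theta> = g_thth a \<tau> \<rho> * (sin \<theta>)\<^sup>2"

end

theory Submission
  imports Defs
begin

text \<open>Write \<open>h \<tau> t = sqrt (a \<tau>\<^sup>2 - a t\<^sup>2)\<close>. The factor \<open>a a' / h \<tau>\<close> that makes the
  integrands of \<open>\<rho>\<close> and \<open>\<chi>\<close> singular at \<open>t = \<tau>\<close> is \<open>-\<partial>\<^sub>t h \<tau>\<close>. Integrating by parts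
  against the weight \<open>\<psi> = 1 / a'\<close> (for \<open>\<rho>\<close>) or \<open>\<psi> = 1 / (a\<^sup>2 a')\<close> (for \<open>\<chi>\<close>) therefore
  rewrites both integrals over \<open>[s, \<tau>]\<close>, \<open>0 < s\<close>, as \<open>\<psi>(s) h \<tau> s + \<integral>\<^sub>s\<^sup>\<tau> \<psi>' h \<tau>\<close>,
  which is jointly continuous in \<open>(\<tau>, s)\<close>.

  Hence \<open>\<rho>\<close>, as a function of \<open>(\<tau>, t\<^sub>0)\<close>, is continuous, strictly decreasing in \<open>t\<^sub>0\<close>
  and symmetric about \<open>\<rho>\<^sub>M\<close>, so \<open>t\<^sub>0(\<tau>, \<rho>)\<close> is its continuous inverse and \<open>g\<^sub>\<theta>\<^sub>\<theta>\<close> is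
  continuous where \<open>t\<^sub>0 \<noteq> 0\<close>. Near \<open>t\<^sub>0 = 0\<close>, monotonicity of \<open>a\<close> gives
  \<open>a(u) \<chi>\<^sub>u(\<tau>) \<le> C a(u) \<integral>\<^sub>u\<^sup>c 1/a + a(u) \<chi>\<^sub>c(\<tau>)\<close>, and both terms tend to \<open>0\<close>; so
  the limit defining \<open>g\<^sub>\<theta>\<^sub>\<theta>\<close> at \<open>\<rho> = \<rho>\<^sub>M\<close> is \<open>0\<close> and continuity persists there.\<close>

lemma integral_rescale_unit_interval:
  fixes g :: "real \<Rightarrow> real"
  assumes "q \<le> r" "continuous_on {q..r} g"
  shows "integral {q..r} g = (r - q) * integral {0..1} (\<lambda>v. g (q + (r - q) * v))"
proof -
  have "q + (r - q) * v \<le> r" if "0 \<le> v" "v \<le> 1" for v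
    using mult_left_le[of v "r - q"] that assms(1) by simp
  then have "((\<lambda>v. (r - q) *\<^sub>R g (q + (r - q) * v)) has_integral
      integral {q + (r - q) * 0..q + (r - q) * 1} g) {0..1}"
    by (intro has_integral_substitution[where c = q and d = r])
       (use assms in \<open>auto intro!: derivative_eq_intros\<close>)
  then show ?thesis by (simp add: has_integral_iff)
qed

lemma continuous_on_integral_variable_bounds:
  fixes g :: "'a::topological_space \<Rightarrow> real \<Rightarrow> real"
  assumes cont: "continuous_on S (\<lambda>z. g (fst z) (snd z))"
    and ordered: "\<And>p q r. (p, q, r) \<in> V \<Longrightarrow> q \<le> r"
    and in_S: "\<And>p q r t. (p, q, r) \<in> V \<Longrightarrow> q \<le> t \<Longrightarrow> t \<le> r \<Longrightarrow> (p, t) \<in> S"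
  shows "continuous_on V (\<lambda>z. integral {fst (snd z)..snd (snd z)} (g (fst z)))"
proof -
  \<comment> \<open>Substituting \<open>t = q + (r - q) v\<close> moves the variable bounds into the integrand,
    which is then integrated over the fixed interval \<open>[0, 1]\<close>.\<close>
  define \<sigma> where "\<sigma> x = (fst (fst x), fst (snd (fst x)) + (snd (snd (fst x)) - fst (snd (fst x))) * snd x)"
    for x :: "('a \<times> real \<times> real) \<times> real"
  have "\<sigma> x \<in> S" if "x \<in> V \<times> cbox 0 1" for x
  proof -
    obtain p q r v where x: "x = ((p, q, r), v)" by (metis prod.collapse)
    with that have pqr: "(p, q, r) \<in> V" and v: "0 \<le> v" "v \<le> 1" by auto
    with ordered have "q \<le> q + (r - q) * v" "q + (r - q) * v \<le> r"
      using mult_left_le[of v "r - q"] by fastforce+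
    then show ?thesis using in_S[OF pqr] x by (simp add: \<sigma>_def)
  qed
  then have "continuous_on (V \<times> cbox 0 1) ((\<lambda>z. g (fst z) (snd z)) \<circ> \<sigma>)"
    unfolding \<sigma>_def
    by (intro continuous_on_compose continuous_intros continuous_on_subset[OF cont] image_subsetI)
       (auto simp: \<sigma>_def)
  then have "continuous_on V (\<lambda>z. integral (cbox 0 1)
      (\<lambda>v. g (fst z) (fst (snd z) + (snd (snd z) - fst (snd z)) * v)))"
    by (intro integral_continuous_on_param) (simp add: \<sigma>_def o_def case_prod_beta)
  then have "continuous_on V (\<lambda>z. (snd (snd z) - fst (snd z)) * integral (cbox 0 1)
      (\<lambda>v. g (fst z) (fst (snd z) + (snd (snd z) - fst (snd z)) * v)))"
    by (intro continuous_intros)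
  then show ?thesis
  proof (rule continuous_on_eq)
    fix z assume z: "z \<in> V"
    obtain p q r where pqr: "z = (p, q, r)" by (metis prod.collapse)
    have "continuous_on {q..r} (\<lambda>t. g (fst (p, t)) (snd (p, t)))"
      by (rule continuous_on_compose2[OF cont]) (use in_S z pqr in \<open>auto intro!: continuous_intros\<close>)
    with integral_rescale_unit_interval[of q r "g p"] ordered z pqr
    show "(snd (snd z) - fst (snd z)) * integral (cbox 0 1)
        (\<lambda>v. g (fst z) (fst (snd z) + (snd (snd z) - fst (snd z)) * v)) =
        integral {fst (snd z)..snd (snd z)} (g (fst z))"
      by simp
  qed
qed

lemma rho_max_le: "rho_max a \<tau> \<le> 2 * rhoM a \<tau>"
proof -
  define S where "S = {\<rho>. 0 < \<rho> \<and> \<rho> < 2 * rhoM a \<tau> \<and> g_tautau a \<tau> \<rho> = 0}"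
  have "Inf S \<le> 2 * rhoM a \<tau>" if "\<rho> \<in> S" for \<rho>
  proof -
    have "Inf S \<le> \<rho>" by (rule cInf_lower[OF that]) (auto simp: S_def intro: bdd_belowI[of _ 0])
    then show ?thesis using that by (simp add: S_def)
  qed
  then show ?thesis unfolding rho_max_def Let_def S_def[symmetric] by auto
qed

section \<open>Integration by parts against the singular kernel\<close>

locale even_scale_factor =
  fixes a a' a'' :: "real \<Rightarrow> real"
  assumes a_0: "a 0 = 0"
    and a_even: "\<And>t. a (- t) = a t"
    and a_strict_mono: "strict_mono_on {0..} a"
    and a_continuous: "continuous_on {0..} a"
    and a_has_derivative: "\<And>t. t > 0 \<Longrightarrow> (a has_real_derivative a' t) (at t)"
    and a'_has_derivative: "\<And>t. t > 0 \<Longrightarrow> (a' has_real_derivative a'' t) (at t)"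
    and a''_continuous: "continuous_on {0<..} a''"
    and a'_nonzero: "\<And>t. t > 0 \<Longrightarrow> a' t \<noteq> 0"
begin

lemma a_abs: "a \<bar>t\<bar> = a t"
  by (cases "t \<ge> 0") (auto simp: a_even)

lemma a_less: "\<bar>s\<bar> < \<bar>t\<bar> \<Longrightarrow> a s < a t"
  using a_strict_mono a_abs unfolding strict_mono_on_def by (metis abs_ge_zero atLeast_iff)

lemma a_le: "\<bar>s\<bar> \<le> \<bar>t\<bar> \<Longrightarrow> a s \<le> a t"
  using a_less a_abs by (metis order_le_less)

lemma a_pos: "t \<noteq> 0 \<Longrightarrow> 0 < a t"
  using a_less[of 0 t] a_0 by simp

lemma a_nonneg: "0 \<le> a t"
  using a_le[of 0 t] a_0 by simp

lemma a_power2_less: "\<bar>t\<bar> < \<bar>\<tau>\<bar> \<Longrightarrow> (a t)\<^sup>2 < (a \<tau>)\<^sup>2"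
  using a_less a_nonneg by (simp add: power_strict_mono)

lemma a_power2_le: "\<bar>t\<bar> \<le> \<bar>\<tau>\<bar> \<Longrightarrow> (a t)\<^sup>2 \<le> (a \<tau>)\<^sup>2"
  using a_le a_nonneg by (simp add: power_mono)

lemma continuous_on_a: "continuous_on S a"
proof -
  have "continuous_on UNIV (\<lambda>t. a \<bar>t\<bar>)"
    by (rule continuous_on_compose2[OF a_continuous]) (auto intro!: continuous_intros)
  then show ?thesis using continuous_on_subset by (simp add: a_abs) blast
qed

lemma continuous_on_a_compose [continuous_intros]:
  "continuous_on S f \<Longrightarrow> continuous_on S (\<lambda>x. a (f x))"
  by (rule continuous_on_compose2[OF continuous_on_a[of UNIV]]) auto

lemma isCont_a: "isCont a t"
  using continuous_on_a[of UNIV] by (simp add: continuous_on_eq_continuous_at)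

lemma continuous_on_a': "continuous_on {0<..} a'"
  by (rule DERIV_continuous_on[where D = a'']) (auto intro: has_field_derivative_at_within a'_has_derivative)

definition h :: "real \<Rightarrow> real \<Rightarrow> real" where
  "h \<tau> t = sqrt ((a \<tau>)\<^sup>2 - (a t)\<^sup>2)"

lemma continuous_on_h: "continuous_on S (\<lambda>z. h (fst z) (snd z))"
  unfolding h_def by (intro continuous_intros)

lemma continuous_on_h_right: "continuous_on S (h \<tau>)"
  unfolding h_def by (intro continuous_intros)

lemma h_pos: "\<bar>t\<bar> < \<bar>\<tau>\<bar> \<Longrightarrow> 0 < h \<tau> t"
  unfolding h_def using a_power2_less by simp

lemma h_nonneg: "\<bar>t\<bar> \<le> \<bar>\<tau>\<bar> \<Longrightarrow> 0 \<le> h \<tau> t"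
  unfolding h_def using a_power2_le by simp

lemma h_le: "h \<tau> t \<le> a \<tau>"
proof -
  have "h \<tau> t \<le> sqrt ((a \<tau>)\<^sup>2)" unfolding h_def by (rule real_sqrt_le_mono) simp
  then show ?thesis using a_nonneg[of \<tau>] by simp
qed

lemma h_antimono: "\<bar>t\<bar> \<le> \<bar>c\<bar> \<Longrightarrow> h \<tau> c \<le> h \<tau> t"
  unfolding h_def using a_power2_le by simp

definition regularized_integral :: "(real \<Rightarrow> real) \<Rightarrow> (real \<Rightarrow> real) \<Rightarrow> real \<Rightarrow> real \<Rightarrow> real" where
  "regularized_integral \<psi> \<psi>' \<tau> s = \<psi> s * h \<tau> s + integral {s..\<tau>} (\<lambda>x. \<psi>' x * h \<tau> x)"

lemma has_integral_weighted_kernel: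
  assumes s: "0 < s" "s \<le> \<tau>"
    and \<psi>: "\<And>x. x > 0 \<Longrightarrow> (\<psi> has_real_derivative \<psi>' x) (at x)"
    and \<psi>': "continuous_on {0<..} \<psi>'"
  shows "((\<lambda>t. \<psi> t * a t * a' t / h \<tau> t) has_integral regularized_integral \<psi> \<psi>' \<tau> s) {s..\<tau>}"
proof -
  define P where "P t = - \<psi> t * h \<tau> t + integral {s..t} (\<lambda>x. \<psi>' x * h \<tau> x)" for t
  have cont_\<psi>h: "continuous_on {s..\<tau>} (\<lambda>x. \<psi>' x * h \<tau> x)"
    by (intro continuous_intros continuous_on_subset[OF \<psi>'] continuous_on_h_right) (use s in auto)
  have "continuous_on {s..\<tau>} \<psi>"
    by (rule DERIV_continuous_on[where D = \<psi>']) (use s in \<open>auto intro!: has_field_derivative_at_within \<psi>\<close>)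
  then have cont_P: "continuous_on {s..\<tau>} P"
    unfolding P_def
    by (intro continuous_intros continuous_on_h_right indefinite_integral_continuous_1
        integrable_continuous_real cont_\<psi>h)
  have "(P has_vector_derivative (\<psi> x * a x * a' x / h \<tau> x)) (at x)" if x: "x \<in> {s<..<\<tau>}" for x
  proof -
    have x0: "x > 0" using x s by auto
    have pos: "0 < (a \<tau>)\<^sup>2 - (a x)\<^sup>2" using a_power2_less[of x \<tau>] x s by auto
    have "((\<lambda>t. (a \<tau>)\<^sup>2 - (a t)\<^sup>2) has_real_derivative - (2 * a x * a' x)) (at x)"
      by (auto intro!: derivative_eq_intros a_has_derivative x0)
    from DERIV_chain2[OF DERIV_real_sqrt[OF pos] this]
    have dh: "(h \<tau> has_real_derivative inverse (h \<tau> x) / 2 * - (2 * a x * a' x)) (at x)"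
      unfolding h_def by simp
    have "((\<lambda>t. integral {s..t} (\<lambda>x. \<psi>' x * h \<tau> x)) has_real_derivative \<psi>' x * h \<tau> x)
        (at x within {s..\<tau>})"
      by (rule integral_has_real_derivative[OF cont_\<psi>h]) (use x in auto)
    moreover have "at x within {s..\<tau>} = at x"
      by (rule at_within_interior) (use x in auto)
    ultimately have di: "((\<lambda>t. integral {s..t} (\<lambda>x. \<psi>' x * h \<tau> x)) has_real_derivative
        \<psi>' x * h \<tau> x) (at x)"
      by simp
    have "(P has_real_derivative
        - \<psi>' x * h \<tau> x + - \<psi> x * (inverse (h \<tau> x) / 2 * - (2 * a x * a' x)) + \<psi>' x * h \<tau> x) (at x)"
      unfolding P_def by (rule derivative_eq_intros \<psi>[OF x0] dh di refl)+ simp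
    moreover have "- \<psi>' x * h \<tau> x + - \<psi> x * (inverse (h \<tau> x) / 2 * - (2 * a x * a' x)) + \<psi>' x * h \<tau> x
        = \<psi> x * a x * a' x / h \<tau> x"
      using pos by (simp add: h_def field_simps)
    ultimately show ?thesis by (simp add: has_real_derivative_iff_has_vector_derivative)
  qed
  from fundamental_theorem_of_calculus_interior[OF s(2) cont_P this]
  show ?thesis by (simp add: P_def regularized_integral_def h_def add.commute)
qed

lemma continuous_on_regularized_integral:
  assumes \<psi>: "continuous_on {0<..} \<psi>" and \<psi>': "continuous_on {0<..} \<psi>'"
  shows "continuous_on {z. 0 < snd z \<and> snd z \<le> fst z} (\<lambda>z. regularized_integral \<psi> \<psi>' (fst z) (snd z))"
proof -
  have "continuous_on (UNIV \<times> {0<..}) (\<lambda>z. \<psi>' (snd z) * h (fst z) (snd z))"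
    by (intro continuous_intros continuous_on_compose2[OF \<psi>'] continuous_on_h) auto
  then have "continuous_on {(p, q, r). 0 < q \<and> q \<le> r \<and> r = p}
      (\<lambda>z. integral {fst (snd z)..snd (snd z)} ((\<lambda>p x. \<psi>' x * h p x) (fst z)))"
    by (rule continuous_on_integral_variable_bounds) auto
  then have "continuous_on {z. 0 < snd z \<and> snd z \<le> fst z}
      (\<lambda>z. integral {fst (snd (fst z, snd z, fst z))..snd (snd (fst z, snd z, fst z))}
        ((\<lambda>p x. \<psi>' x * h p x) (fst (fst z, snd z, fst z))))"
    by (rule continuous_on_compose2) (auto intro!: continuous_intros)
  then have "continuous_on {z. 0 < snd z \<and> snd z \<le> fst z}
      (\<lambda>z. \<psi> (snd z) * h (fst z) (snd z) + integral {snd z..fst z} (\<lambda>x. \<psi>' x * h (fst z) x))"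
    by (intro continuous_intros continuous_on_compose2[OF \<psi>] continuous_on_h) auto
  then show ?thesis by (simp add: regularized_integral_def)
qed

section \<open>The radial integral and its inverse \<open>t0\<close>\<close>

definition rho_kernel :: "real \<Rightarrow> real \<Rightarrow> real" where
  "rho_kernel \<tau> t = a t / sqrt ((a \<tau>)\<^sup>2 - (a t)\<^sup>2)"

definition rho_int :: "real \<Rightarrow> real \<Rightarrow> real" where
  "rho_int \<tau> s = integral {s..\<tau>} (rho_kernel \<tau>)"

definition chi_kernel :: "real \<Rightarrow> real \<Rightarrow> real" where
  "chi_kernel \<tau> t = 1 / a t * (a \<tau> / sqrt ((a \<tau>)\<^sup>2 - (a t)\<^sup>2))"

definition rho_weight :: "real \<Rightarrow> real" where
  "rho_weight t = 1 / a' t"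

definition rho_weight' :: "real \<Rightarrow> real" where
  "rho_weight' t = - a'' t / (a' t)\<^sup>2"

definition chi_weight :: "real \<Rightarrow> real" where
  "chi_weight t = 1 / ((a t)\<^sup>2 * a' t)"

definition chi_weight' :: "real \<Rightarrow> real" where
  "chi_weight' t = - (2 * a t * a' t * a' t + (a t)\<^sup>2 * a'' t) / ((a t)\<^sup>2 * a' t)\<^sup>2"

lemma has_real_derivative_rho_weight: "t > 0 \<Longrightarrow> (rho_weight has_real_derivative rho_weight' t) (at t)"
  unfolding rho_weight_def rho_weight'_def using a'_nonzero[of t]
  by (auto intro!: derivative_eq_intros a'_has_derivative simp: field_simps power2_eq_square)

lemma has_real_derivative_chi_weight: "t > 0 \<Longrightarrow> (chi_weight has_real_derivative chi_weight' t) (at t)"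
  unfolding chi_weight_def chi_weight'_def using a'_nonzero[of t] a_pos[of t]
  by (auto intro!: derivative_eq_intros a_has_derivative a'_has_derivative
      simp: field_simps power2_eq_square)

lemma continuous_on_rho_weight': "continuous_on {0<..} rho_weight'"
  unfolding rho_weight'_def using a'_nonzero
  by (auto intro!: continuous_intros a''_continuous continuous_on_a')

lemma continuous_on_chi_weight': "continuous_on {0<..} chi_weight'"
proof -
  have "((a t)\<^sup>2 * a' t)\<^sup>2 \<noteq> 0" if "t > 0" for t
    using a'_nonzero[OF that] a_pos[of t] that by simp
  then show ?thesis
    unfolding chi_weight'_def by (auto intro!: continuous_intros a''_continuous continuous_on_a')
qed

lemma continuous_on_rho_weight: "continuous_on {0<..} rho_weight"
  by (rule DERIV_continuous_on[where D = rho_weight'])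
     (auto intro!: has_field_derivative_at_within has_real_derivative_rho_weight)

lemma continuous_on_chi_weight: "continuous_on {0<..} chi_weight"
  by (rule DERIV_continuous_on[where D = chi_weight'])
     (auto intro!: has_field_derivative_at_within has_real_derivative_chi_weight)

lemma rho_kernel_has_integral:
  assumes "0 < s" "s \<le> \<tau>"
  shows "(rho_kernel \<tau> has_integral regularized_integral rho_weight rho_weight' \<tau> s) {s..\<tau>}"
proof (rule has_integral_eq[OF _ has_integral_weighted_kernel[OF assms
      has_real_derivative_rho_weight continuous_on_rho_weight']])
  fix t assume "t \<in> {s..\<tau>}"
  then have "a' t \<noteq> 0" using assms a'_nonzero by auto
  then show "rho_weight t * a t * a' t / h \<tau> t = rho_kernel \<tau> t"
    by (simp add: rho_weight_def rho_kernel_def h_def)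
qed

lemma chi_kernel_has_integral:
  assumes "0 < s" "s \<le> \<tau>"
  shows "(chi_kernel \<tau> has_integral a \<tau> * regularized_integral chi_weight chi_weight' \<tau> s) {s..\<tau>}"
proof (rule has_integral_eq[OF _ has_integral_mult_right[OF has_integral_weighted_kernel[OF assms
      has_real_derivative_chi_weight continuous_on_chi_weight']]])
  fix t assume "t \<in> {s..\<tau>}"
  then have "a' t \<noteq> 0" "a t \<noteq> 0" using assms a'_nonzero a_pos[of t] by auto
  then show "a \<tau> * (chi_weight t * a t * a' t / h \<tau> t) = chi_kernel \<tau> t"
    by (simp add: chi_weight_def chi_kernel_def h_def power2_eq_square)
qed

lemma chi_eq_regularized_integral: "0 < s \<Longrightarrow> s \<le> \<tau> \<Longrightarrow> chi a s \<tau> = a \<tau> * regularized_integral chi_weight chi_weight' \<tau> s"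
  using chi_kernel_has_integral unfolding chi_def chi_kernel_def[abs_def] by (simp add: integral_unique)

lemma rho_int_eq_regularized_integral: "0 < s \<Longrightarrow> s \<le> \<tau> \<Longrightarrow> rho_int \<tau> s = regularized_integral rho_weight rho_weight' \<tau> s"
  unfolding rho_int_def using rho_kernel_has_integral by (simp add: integral_unique)

lemma continuous_on_regularized_rho_int: "continuous_on {z. 0 < snd z \<and> snd z \<le> fst z}
    (\<lambda>z. regularized_integral rho_weight rho_weight' (fst z) (snd z))"
  by (rule continuous_on_regularized_integral[OF continuous_on_rho_weight continuous_on_rho_weight'])

lemma continuous_on_rho_kernel: "continuous_on {z. \<bar>snd z\<bar> < fst z} (\<lambda>z. rho_kernel (fst z) (snd z))"
proof -
  have "continuous_on {z. \<bar>snd z\<bar> < fst z} (\<lambda>z. a (snd z) / h (fst z) (snd z))"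
  proof (intro continuous_intros continuous_on_divide continuous_on_h ballI)
    fix z :: "real \<times> real" assume "z \<in> {z. \<bar>snd z\<bar> < fst z}"
    then show "h (fst z) (snd z) \<noteq> 0" using h_pos[of "snd z" "fst z"] by simp
  qed
  then show ?thesis by (simp add: rho_kernel_def h_def)
qed

lemma continuous_on_rho_kernel_interval:
  "\<bar>p\<bar> < \<tau> \<Longrightarrow> \<bar>q\<bar> < \<tau> \<Longrightarrow> continuous_on {p..q} (rho_kernel \<tau>)"
  using continuous_on_compose2[OF continuous_on_rho_kernel, of "{p..q}" "\<lambda>t. (\<tau>, t)"]
  by (force intro!: continuous_intros)

lemma rho_kernel_nonneg: "\<bar>t\<bar> \<le> \<bar>\<tau>\<bar> \<Longrightarrow> 0 \<le> rho_kernel \<tau> t"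
  using a_nonneg[of t] h_nonneg[of t \<tau>] by (simp add: rho_kernel_def h_def[symmetric])

lemma rho_kernel_lower_bound: "\<bar>t\<bar> < \<tau> \<Longrightarrow> a t / a \<tau> \<le> rho_kernel \<tau> t"
  using h_pos[of t \<tau>] a_pos[of \<tau>] h_le[of \<tau> t]
  by (simp add: rho_kernel_def h_def[symmetric] divide_left_mono a_nonneg)

lemma rho_kernel_integrable:
  assumes "-\<tau> < s" "s < \<tau>"
  shows "rho_kernel \<tau> integrable_on {s..\<tau>}"
proof -
  define c where "c = (max s 0 + \<tau>) / 2"
  have c: "0 < c" "s \<le> c" "c \<le> \<tau>" "\<bar>c\<bar> < \<tau>" using assms by (auto simp: c_def)
  have "rho_kernel \<tau> integrable_on {s..c}"
    using assms c by (intro integrable_continuous_real continuous_on_rho_kernel_interval) auto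
  moreover have "rho_kernel \<tau> integrable_on {c..\<tau>}" using rho_kernel_has_integral[OF c(1,3)] by blast
  ultimately show ?thesis by (rule Henstock_Kurzweil_Integration.integrable_combine[OF c(2,3)])
qed

lemma rho_int_split:
  assumes "0 < c" "c < \<tau>" "-\<tau> < s" "s \<le> c"
  shows "rho_int \<tau> s = integral {s..c} (rho_kernel \<tau>) + regularized_integral rho_weight rho_weight' \<tau> c"
proof -
  have "integral {s..c} (rho_kernel \<tau>) + integral {c..\<tau>} (rho_kernel \<tau>) = rho_int \<tau> s"
    unfolding rho_int_def by (rule Henstock_Kurzweil_Integration.integral_combine) (use assms in \<open>auto intro!: rho_kernel_integrable\<close>)
  then show ?thesis using rho_int_eq_regularized_integral[of c \<tau>] assms unfolding rho_int_def by simp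
qed

lemma isCont_rho_int:
  assumes "-\<tau>0 < s0" "s0 < \<tau>0"
  shows "isCont (\<lambda>z. rho_int (fst z) (snd z)) (\<tau>0, s0)"
proof -
  define c where "c = (max s0 0 + \<tau>0) / 2"
  have c: "0 < c" "s0 < c" "c < \<tau>0" using assms by (auto simp: c_def)
  define N where "N = {z::real \<times> real. - fst z < snd z \<and> snd z < c \<and> c < fst z}"
  have "open N" unfolding N_def by (intro open_Collect_conj open_Collect_less continuous_intros)
  moreover have "(\<tau>0, s0) \<in> N" using c assms by (auto simp: N_def)
  moreover have "continuous_on N (\<lambda>z. rho_int (fst z) (snd z))"
  proof -
    have "continuous_on {(p, q, r). r = c \<and> -p < q \<and> q < c \<and> c < p}
        (\<lambda>z. integral {fst (snd z)..snd (snd z)} (rho_kernel (fst z)))"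
      by (rule continuous_on_integral_variable_bounds[OF continuous_on_rho_kernel]) auto
    then have "continuous_on N (\<lambda>z. integral {fst (snd (fst z, snd z, c))..snd (snd (fst z, snd z, c))}
        (rho_kernel (fst (fst z, snd z, c))))"
      by (rule continuous_on_compose2) (auto simp: N_def intro!: continuous_intros)
    moreover have "continuous_on N (\<lambda>z. regularized_integral rho_weight rho_weight' (fst (fst z, c)) (snd (fst z, c)))"
      by (rule continuous_on_compose2[OF continuous_on_regularized_rho_int])
         (use c in \<open>auto simp: N_def intro!: continuous_intros\<close>)
    ultimately have "continuous_on N (\<lambda>z. integral {snd z..c} (rho_kernel (fst z))
        + regularized_integral rho_weight rho_weight' (fst z) c)"
      by (intro continuous_intros) auto
    then show ?thesis
      by (rule continuous_on_eq) (use c rho_int_split in \<open>auto simp: N_def\<close>)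
  qed
  ultimately show ?thesis using continuous_on_eq_continuous_at by blast
qed

lemma isCont_rho_int_right: "\<bar>s\<bar> < \<tau> \<Longrightarrow> isCont (rho_int \<tau>) s"
  using continuous_at_compose[of s "\<lambda>s. (\<tau>, s)" "\<lambda>z. rho_int (fst z) (snd z)"] isCont_rho_int[of \<tau> s]
  by (simp add: o_def)

lemma isCont_rho_int_left: "\<bar>s\<bar> < \<tau>0 \<Longrightarrow> isCont (\<lambda>\<tau>. rho_int \<tau> s) \<tau>0"
  using continuous_at_compose[of \<tau>0 "\<lambda>\<tau>. (\<tau>, s)" "\<lambda>z. rho_int (fst z) (snd z)"] isCont_rho_int[of \<tau>0 s]
  by (simp add: o_def)

lemma continuous_on_rho_int: "0 < \<tau> \<Longrightarrow> continuous_on {0..\<tau>} (rho_int \<tau>)"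
proof -
  assume "0 < \<tau>"
  have "continuous_on {0..\<tau>/2} (rho_int \<tau>)"
    by (intro continuous_at_imp_continuous_on ballI isCont_rho_int_right) (use \<open>0 < \<tau>\<close> in auto)
  moreover have "continuous_on {\<tau>/2..\<tau>} (\<lambda>s. regularized_integral rho_weight rho_weight' (fst (\<tau>, s)) (snd (\<tau>, s)))"
    by (rule continuous_on_compose2[OF continuous_on_regularized_rho_int])
       (use \<open>0 < \<tau>\<close> in \<open>auto intro!: continuous_intros\<close>)
  then have "continuous_on {\<tau>/2..\<tau>} (rho_int \<tau>)"
    by (rule continuous_on_eq) (use \<open>0 < \<tau>\<close> rho_int_eq_regularized_integral in auto)
  ultimately have "continuous_on ({0..\<tau>/2} \<union> {\<tau>/2..\<tau>}) (rho_int \<tau>)"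
    by (intro continuous_on_closed_Un) auto
  moreover have "{0..\<tau>/2} \<union> {\<tau>/2..\<tau>} = {0..\<tau>}" using \<open>0 < \<tau>\<close> by auto
  ultimately show ?thesis by simp
qed

lemma integral_rho_kernel_pos:
  assumes "-\<tau> < s1" "s1 < s2" "s2 < \<tau>"
  shows "0 < integral {s1..s2} (rho_kernel \<tau>)"
proof -
  \<comment> \<open>A subinterval \<open>[p, q]\<close> bounded away from \<open>0\<close>, on which the kernel is at least \<open>a d / a \<tau>\<close>.\<close>
  obtain p q d where pq: "s1 \<le> p" "p < q" "q \<le> s2" "0 < d"
    and d: "\<And>t. p \<le> t \<Longrightarrow> t \<le> q \<Longrightarrow> d \<le> \<bar>t\<bar>"
  proof (cases "s2 > 0")
    case True
    show ?thesis by (rule that[of "max s1 (s2/2)" s2 "max s1 (s2/2)"]) (use True assms in auto)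
  next
    case False
    show ?thesis by (rule that[of s1 "min s2 (s1/2)" "- min s2 (s1/2)"]) (use False assms in auto)
  qed
  have pos: "0 < a \<tau>" "0 < a d" using a_pos[of \<tau>] a_pos[of d] assms pq by auto
  have cont: "continuous_on {s1..s2} (rho_kernel \<tau>)"
    using assms by (intro continuous_on_rho_kernel_interval) auto
  then have int_pq: "rho_kernel \<tau> integrable_on {p..q}"
    by (intro integrable_continuous_real continuous_on_subset[OF cont]) (use pq in auto)
  have "0 < (q - p) * (a d / a \<tau>)" using pq pos by simp
  also have "\<dots> = integral {p..q} (\<lambda>_. a d / a \<tau>)" using pq by simp
  also have "\<dots> \<le> integral {p..q} (rho_kernel \<tau>)"
  proof (rule integral_le[OF integrable_const_ivl int_pq])
    fix t assume t: "t \<in> {p..q}"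
    then have "a d \<le> a t" using d[of t] pq by (intro a_le) auto
    then have "a d / a \<tau> \<le> a t / a \<tau>" using pos by (simp add: divide_right_mono)
    also have "\<dots> \<le> rho_kernel \<tau> t" by (rule rho_kernel_lower_bound) (use t pq assms in auto)
    finally show "a d / a \<tau> \<le> rho_kernel \<tau> t" .
  qed
  also have "\<dots> \<le> integral {s1..s2} (rho_kernel \<tau>)"
    by (rule integral_subset_le[OF _ int_pq integrable_continuous_real[OF cont]])
       (use pq assms in \<open>auto intro!: rho_kernel_nonneg\<close>)
  finally show ?thesis .
qed

lemma rho_int_strict_antimono:
  assumes "-\<tau> < s1" "s1 < s2" "s2 < \<tau>"
  shows "rho_int \<tau> s2 < rho_int \<tau> s1"
proof -
  have "integral {s1..s2} (rho_kernel \<tau>) + rho_int \<tau> s2 = rho_int \<tau> s1"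
    unfolding rho_int_def
    by (rule Henstock_Kurzweil_Integration.integral_combine) (use assms in \<open>auto intro!: rho_kernel_integrable\<close>)
  then show ?thesis using integral_rho_kernel_pos[OF assms] by simp
qed

lemma rho_int_less_iff:
  assumes "\<bar>s1\<bar> < \<tau>" "\<bar>s2\<bar> < \<tau>"
  shows "rho_int \<tau> s2 < rho_int \<tau> s1 \<longleftrightarrow> s1 < s2"
  using rho_int_strict_antimono[of \<tau> s1 s2] rho_int_strict_antimono[of \<tau> s2 s1] assms
  by (cases s1 s2 rule: linorder_cases) (auto simp: abs_less_iff)

lemma rho_int_reflect:
  assumes "0 \<le> s" "s < \<tau>"
  shows "rho_int \<tau> (-s) = 2 * rho_int \<tau> 0 - rho_int \<tau> s"
proof -
  have "integral {-s..0} (rho_kernel \<tau>) + rho_int \<tau> 0 = rho_int \<tau> (-s)"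
    "integral {0..s} (rho_kernel \<tau>) + rho_int \<tau> s = rho_int \<tau> 0"
    unfolding rho_int_def
    by (rule Henstock_Kurzweil_Integration.integral_combine; use assms in \<open>auto intro!: rho_kernel_integrable\<close>)+
  moreover have "(\<lambda>x. rho_kernel \<tau> (-x)) = rho_kernel \<tau>"
    by (simp add: fun_eq_iff rho_kernel_def a_even)
  then have "integral {-s..0} (rho_kernel \<tau>) = integral {0..s} (rho_kernel \<tau>)"
    using Henstock_Kurzweil_Integration.integral_reflect_real[of "-0" "-s" "rho_kernel \<tau>"] by simp
  ultimately show ?thesis by simp
qed

lemma rho_int_surj:
  assumes \<tau>: "0 < \<tau>" and "0 < \<rho>" "\<rho> < 2 * rho_int \<tau> 0"
  shows "\<exists>s. -\<tau> < s \<and> s < \<tau> \<and> rho_int \<tau> s = \<rho>"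
proof -
  have half: "\<exists>s. 0 \<le> s \<and> s < \<tau> \<and> rho_int \<tau> s = r" if r: "0 < r" "r \<le> rho_int \<tau> 0" for r
  proof -
    obtain s where s: "0 \<le> s" "s \<le> \<tau>" "rho_int \<tau> s = r"
      using IVT2'[OF _ _ _ continuous_on_rho_int[OF \<tau>], of r] r \<tau> by (auto simp: rho_int_def)
    moreover have "s \<noteq> \<tau>" using s r by (auto simp: rho_int_def)
    ultimately show ?thesis by auto
  qed
  show ?thesis
  proof (cases "\<rho> \<le> rho_int \<tau> 0")
    case True
    then show ?thesis using half[OF assms(2)] by force
  next
    case False
    \<comment> \<open>The reflection \<open>s \<mapsto> -s\<close> maps the values \<open>(0, \<rho>\<^sub>M]\<close> onto \<open>[\<rho>\<^sub>M, 2 \<rho>\<^sub>M)\<close>.\<close>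
    then obtain s where "0 \<le> s" "s < \<tau>" "rho_int \<tau> s = 2 * rho_int \<tau> 0 - \<rho>"
      using half[of "2 * rho_int \<tau> 0 - \<rho>"] assms by auto
    then show ?thesis using rho_int_reflect by (intro exI[of _ "-s"]) auto
  qed
qed

lemma rhoM_eq_rho_int: "rhoM a \<tau> = rho_int \<tau> 0"
  by (simp add: rhoM_def rho_int_def rho_kernel_def[abs_def])

lemma t0_rho_int:
  assumes "\<bar>s\<bar> < \<tau>"
  shows "t0 a \<tau> (rho_int \<tau> s) = s"
  unfolding t0_def
proof (rule the_equality)
  show "- \<tau> < s \<and> s < \<tau> \<and> rho_int \<tau> s = integral {s..\<tau>} (\<lambda>t. a t / sqrt ((a \<tau>)\<^sup>2 - (a t)\<^sup>2))"
    using assms by (simp add: rho_int_def rho_kernel_def[abs_def] abs_less_iff)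
  fix s' assume "- \<tau> < s' \<and> s' < \<tau> \<and> rho_int \<tau> s = integral {s'..\<tau>} (\<lambda>t. a t / sqrt ((a \<tau>)\<^sup>2 - (a t)\<^sup>2))"
  then show "s' = s"
    using rho_int_less_iff[of s \<tau> s'] rho_int_less_iff[of s' \<tau> s] assms
    by (auto simp: rho_int_def rho_kernel_def[abs_def] abs_less_iff)
qed

lemma t0_bounds:
  assumes "0 < \<tau>" "0 < \<rho>" "\<rho> < 2 * rho_int \<tau> 0"
  shows "\<bar>t0 a \<tau> \<rho>\<bar> < \<tau> \<and> rho_int \<tau> (t0 a \<tau> \<rho>) = \<rho>"
  using rho_int_surj[OF assms] t0_rho_int by fastforce

lemma tendsto_rho_int_left:
  assumes "\<bar>s\<bar> < \<tau>0"
  shows "((\<lambda>z. rho_int (fst z) s) \<longlongrightarrow> rho_int \<tau>0 s) (at (\<tau>0, \<rho>0))"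
proof -
  have "(fst \<longlongrightarrow> \<tau>0) (at (\<tau>0, \<rho>0))"
    using tendsto_fst[OF tendsto_ident_at[of "(\<tau>0, \<rho>0)" UNIV]] by simp
  from isCont_tendsto_compose[OF isCont_rho_int_left[OF assms] this] show ?thesis .
qed

lemma eventually_t0_bounds:
  assumes "0 < \<tau>0" "0 < \<rho>0" "\<rho>0 < 2 * rho_int \<tau>0 0"
  shows "\<forall>\<^sub>F z in at (\<tau>0, \<rho>0).
    \<bar>t0 a (fst z) (snd z)\<bar> < fst z \<and> rho_int (fst z) (t0 a (fst z) (snd z)) = snd z"
proof -
  let ?F = "at (\<tau>0, \<rho>0)"
  have \<tau>_lim: "(fst \<longlongrightarrow> \<tau>0) ?F" and \<rho>_lim: "(snd \<longlongrightarrow> \<rho>0) ?F"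
    using tendsto_fst[OF tendsto_ident_at] tendsto_snd[OF tendsto_ident_at] by auto
  have "((\<lambda>z. 2 * rho_int (fst z) 0 - snd z) \<longlongrightarrow> 2 * rho_int \<tau>0 0 - \<rho>0) ?F"
    using tendsto_rho_int_left[of 0] assms(1) by (intro tendsto_intros \<rho>_lim) auto
  then have "\<forall>\<^sub>F z in ?F. 0 < 2 * rho_int (fst z) 0 - snd z"
    by (rule order_tendstoD(1)) (use assms in simp)
  with order_tendstoD(1)[OF \<tau>_lim assms(1)] order_tendstoD(1)[OF \<rho>_lim assms(2)]
  show ?thesis by eventually_elim (use t0_bounds in auto)
qed

lemma isCont_t0:
  assumes "0 < \<tau>0" "0 < \<rho>0" "\<rho>0 < 2 * rho_int \<tau>0 0"
  shows "isCont (\<lambda>z. t0 a (fst z) (snd z)) (\<tau>0, \<rho>0)"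
proof -
  let ?F = "at (\<tau>0, \<rho>0)"
  define s0 where "s0 = t0 a \<tau>0 \<rho>0"
  have s0: "\<bar>s0\<bar> < \<tau>0" "rho_int \<tau>0 s0 = \<rho>0" using t0_bounds[OF assms] by (auto simp: s0_def)
  have \<tau>_lim: "(fst \<longlongrightarrow> \<tau>0) ?F" and \<rho>_lim: "(snd \<longlongrightarrow> \<rho>0) ?F"
    using tendsto_fst[OF tendsto_ident_at] tendsto_snd[OF tendsto_ident_at] by auto
  note t0_ev = eventually_t0_bounds[OF assms]
  \<comment> \<open>\<open>t0\<close> is squeezed between any two points \<open>s\<^sub>L < s0 < s\<^sub>R\<close>, since \<open>rho_int\<close> is strictly
    decreasing in \<open>s\<close> and continuous in \<open>\<tau>\<close>.\<close>
  have "((\<lambda>z. t0 a (fst z) (snd z)) \<longlongrightarrow> s0) ?F"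
  proof (rule order_tendstoI)
    fix b assume "b < s0"
    define sL where "sL = max b ((s0 - \<tau>0) / 2)"
    have sL: "sL < s0" "\<bar>sL\<bar> < \<tau>0" using \<open>b < s0\<close> s0 by (auto simp: sL_def abs_less_iff max_def field_simps)
    then have "\<rho>0 < rho_int \<tau>0 sL" using rho_int_less_iff s0 by metis
    then have "\<forall>\<^sub>F z in ?F. snd z < rho_int (fst z) sL"
      using order_tendstoD(1)[OF tendsto_diff[OF tendsto_rho_int_left[OF sL(2)] \<rho>_lim], of 0] by simp
    with t0_ev order_tendstoD(1)[OF \<tau>_lim sL(2)]
    show "\<forall>\<^sub>F z in ?F. b < t0 a (fst z) (snd z)"
    proof eventually_elim
      case (elim z)
      then have "sL < t0 a (fst z) (snd z)" using rho_int_less_iff[of sL "fst z" "t0 a (fst z) (snd z)"] by auto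
      then show ?case by (simp add: sL_def)
    qed
  next
    fix b assume "s0 < b"
    define sR where "sR = min b ((s0 + \<tau>0) / 2)"
    have sR: "s0 < sR" "\<bar>sR\<bar> < \<tau>0" using \<open>s0 < b\<close> s0 by (auto simp: sR_def abs_less_iff min_def field_simps)
    then have "rho_int \<tau>0 sR < \<rho>0" using rho_int_less_iff s0 by metis
    then have "\<forall>\<^sub>F z in ?F. rho_int (fst z) sR < snd z"
      using order_tendstoD(1)[OF tendsto_diff[OF \<rho>_lim tendsto_rho_int_left[OF sR(2)]], of 0] by simp
    with t0_ev order_tendstoD(1)[OF \<tau>_lim sR(2)]
    show "\<forall>\<^sub>F z in ?F. t0 a (fst z) (snd z) < b"
    proof eventually_elim
      case (elim z)
      then have "t0 a (fst z) (snd z) < sR" using rho_int_less_iff[of "t0 a (fst z) (snd z)" "fst z" sR] by auto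
      then show ?case by (simp add: sR_def)
    qed
  qed
  then show ?thesis by (simp add: isCont_def s0_def)
qed

section \<open>Continuity of \<open>g\<^sub>\<theta>\<^sub>\<theta>\<close> across \<open>t0 = 0\<close>\<close>

lemma continuous_on_chi: "continuous_on {z. 0 < snd z \<and> snd z \<le> fst z} (\<lambda>z. chi a (snd z) (fst z))"
proof -
  have "continuous_on {z. 0 < snd z \<and> snd z \<le> fst z}
      (\<lambda>z. a (fst z) * regularized_integral chi_weight chi_weight' (fst z) (snd z))"
    by (intro continuous_intros continuous_on_regularized_integral continuous_on_chi_weight continuous_on_chi_weight')
  then show ?thesis by (rule continuous_on_eq) (simp add: chi_eq_regularized_integral)
qed

lemma chi_kernel_nonneg: "\<bar>t\<bar> \<le> \<bar>\<tau>\<bar> \<Longrightarrow> 0 \<le> chi_kernel \<tau> t"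
  using a_nonneg[of t] a_nonneg[of \<tau>] h_nonneg[of t \<tau>] by (simp add: chi_kernel_def h_def[symmetric])

lemma continuous_on_inverse_a: "0 < p \<Longrightarrow> continuous_on {p..q} (\<lambda>t. 1 / a t)"
  using a_pos[of t for t] by (intro continuous_intros ballI) (metis atLeastAtMost_iff less_le_trans less_irrefl)

lemma integral_inverse_a_le:
  assumes "0 < p" "p \<le> q"
  shows "integral {p..q} (\<lambda>t. 1 / a t) \<le> (q - p) / a p"
proof -
  have "integral {p..q} (\<lambda>t. 1 / a t) \<le> integral {p..q} (\<lambda>_. 1 / a p)"
  proof (rule integral_le[OF integrable_continuous_real[OF continuous_on_inverse_a[OF assms(1)]]
        integrable_const_ivl])
    fix t assume "t \<in> {p..q}"
    then show "1 / a t \<le> 1 / a p" using a_le[of p t] a_pos[of p] assms by (simp add: frac_le)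
  qed
  then show ?thesis using assms by simp
qed

definition scaled_inverse_integral :: "real \<Rightarrow> real \<Rightarrow> real" where
  "scaled_inverse_integral c u = a u * integral {u..c} (\<lambda>t. 1 / a t)"

lemma scaled_inverse_integral_nonneg: "0 < u \<Longrightarrow> 0 \<le> scaled_inverse_integral c u"
  unfolding scaled_inverse_integral_def
  by (intro mult_nonneg_nonneg a_nonneg integral_nonneg integrable_continuous_real
      continuous_on_inverse_a) (auto simp: a_nonneg)

lemma scaled_inverse_integral_le:
  assumes "0 < u" "u \<le> d" "d \<le> c"
  shows "scaled_inverse_integral c u \<le> d + a u * (c / a d)"
proof -
  have pos: "0 < a u" "0 < a d" using a_pos assms by auto
  \<comment> \<open>On \<open>[u, d]\<close> the integrand is at most \<open>1 / a u\<close>, which cancels the factor \<open>a u\<close>.\<close>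
  have "integral {u..d} (\<lambda>t. 1 / a t) + integral {d..c} (\<lambda>t. 1 / a t) = integral {u..c} (\<lambda>t. 1 / a t)"
    by (rule Henstock_Kurzweil_Integration.integral_combine)
       (use assms in \<open>auto intro!: integrable_continuous_real continuous_on_inverse_a\<close>)
  then have "scaled_inverse_integral c u
      = a u * integral {u..d} (\<lambda>t. 1 / a t) + a u * integral {d..c} (\<lambda>t. 1 / a t)"
    unfolding scaled_inverse_integral_def by (metis distrib_left)
  also have "a u * integral {u..d} (\<lambda>t. 1 / a t) \<le> a u * ((d - u) / a u)"
    using integral_inverse_a_le[of u d] assms pos by (intro mult_left_mono) auto
  also have "a u * ((d - u) / a u) \<le> d" using pos assms by simp
  also have "a u * integral {d..c} (\<lambda>t. 1 / a t) \<le> a u * (c / a d)"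
  proof (rule mult_left_mono)
    have "(c - d) / a d \<le> c / a d" using pos assms by (intro divide_right_mono) auto
    then show "integral {d..c} (\<lambda>t. 1 / a t) \<le> c / a d"
      using integral_inverse_a_le[of d c] assms by linarith
  qed (use pos in simp)
  finally show ?thesis by simp
qed

lemma scaled_inverse_integral_tendsto_0:
  assumes c: "0 < c"
  shows "((\<lambda>u. scaled_inverse_integral c \<bar>u\<bar>) \<longlongrightarrow> 0) (at 0)"
proof (rule tendstoI)
  fix \<epsilon> :: real assume "0 < \<epsilon>"
  define d where "d = min (\<epsilon>/2) c"
  have d: "0 < d" "d \<le> \<epsilon>/2" "d \<le> c" using c \<open>0 < \<epsilon>\<close> by (auto simp: d_def)
  have ad: "0 < a d" using a_pos[of d] d by simp
  have "(a \<longlongrightarrow> 0) (at 0)" using isCont_a[of 0] by (simp add: isCont_def a_0)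
  then have "\<forall>\<^sub>F u in at 0. a u < \<epsilon> / 2 / (c / a d)"
    by (rule order_tendstoD) (use \<open>0 < \<epsilon>\<close> c ad in simp)
  moreover have "\<forall>\<^sub>F u in at (0::real). u \<noteq> 0 \<and> \<bar>u\<bar> < d"
    using eventually_at[of "\<lambda>u. u \<noteq> 0 \<and> \<bar>u\<bar> < d" 0 UNIV] d by (auto simp: dist_real_def)
  ultimately show "\<forall>\<^sub>F u in at 0. dist (scaled_inverse_integral c \<bar>u\<bar>) 0 < \<epsilon>"
  proof eventually_elim
    case (elim u)
    then have "a \<bar>u\<bar> * (c / a d) < \<epsilon> / 2" using c ad by (simp add: a_abs field_simps)
    then have "scaled_inverse_integral c \<bar>u\<bar> < \<epsilon>"
      using scaled_inverse_integral_le[of "\<bar>u\<bar>" d c] elim d by linarith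
    then show ?case using scaled_inverse_integral_nonneg[of "\<bar>u\<bar>" c] elim by simp
  qed
qed

lemma isCont_scaled_inverse_integral_abs: "0 < c \<Longrightarrow> isCont (\<lambda>u. scaled_inverse_integral c \<bar>u\<bar>) 0"
  using scaled_inverse_integral_tendsto_0 by (simp add: isCont_def scaled_inverse_integral_def a_0)

lemma chi_eq_integral_chi_kernel: "chi a s \<tau> = integral {s..\<tau>} (chi_kernel \<tau>)"
  by (simp add: chi_def chi_kernel_def[abs_def])

lemma chi_bound:
  assumes u: "0 < u" "u \<le> c" and c: "c < \<tau>"
  shows "0 \<le> chi a u \<tau>"
    and "a u * chi a u \<tau> \<le> a \<tau> / h \<tau> c * scaled_inverse_integral c u + a u * chi a c \<tau>"
proof -
  define M where "M = a \<tau> / h \<tau> c"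
  have hc: "0 < h \<tau> c" using h_pos[of c \<tau>] u c by simp
  have int: "chi_kernel \<tau> integrable_on {u..c}" "chi_kernel \<tau> integrable_on {c..\<tau>}"
    "chi_kernel \<tau> integrable_on {u..\<tau>}"
    using chi_kernel_has_integral[of u \<tau>] chi_kernel_has_integral[of c \<tau>] u c
    by (auto intro: integrable_subinterval_real)
  have split: "chi a u \<tau> = integral {u..c} (chi_kernel \<tau>) + chi a c \<tau>"
    unfolding chi_eq_integral_chi_kernel
    by (rule Henstock_Kurzweil_Integration.integral_combine[symmetric]) (use u c int in auto)
  have "integral {u..c} (chi_kernel \<tau>) \<le> integral {u..c} (\<lambda>t. M * (1 / a t))"
  proof (rule integral_le[OF int(1)])
    show "(\<lambda>t. M * (1 / a t)) integrable_on {u..c}"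
      using u by (intro integrable_on_mult_right integrable_continuous_real continuous_on_inverse_a)
    fix t assume t: "t \<in> {u..c}"
    have "h \<tau> c \<le> h \<tau> t" using t u by (intro h_antimono) auto
    then have "a \<tau> / h \<tau> t \<le> M"
      unfolding M_def using hc a_nonneg[of \<tau>] by (intro divide_left_mono) auto
    then have "1 / a t * (a \<tau> / h \<tau> t) \<le> 1 / a t * M"
      using a_pos[of t] t u by (intro mult_left_mono) auto
    then show "chi_kernel \<tau> t \<le> M * (1 / a t)"
      by (simp add: chi_kernel_def h_def[symmetric] mult.commute)
  qed
  also have "\<dots> = M * integral {u..c} (\<lambda>t. 1 / a t)" by (rule integral_mult_right)
  finally have "a u * integral {u..c} (chi_kernel \<tau>) \<le> a u * (M * integral {u..c} (\<lambda>t. 1 / a t))"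
    by (rule mult_left_mono) (rule a_nonneg)
  then have "a u * integral {u..c} (chi_kernel \<tau>) \<le> M * scaled_inverse_integral c u"
    by (simp add: scaled_inverse_integral_def mult.left_commute)
  then show "a u * chi a u \<tau> \<le> a \<tau> / h \<tau> c * scaled_inverse_integral c u + a u * chi a c \<tau>"
    by (simp add: split distrib_left M_def)
  show "0 \<le> chi a u \<tau>"
    unfolding chi_eq_integral_chi_kernel using u c
    by (intro integral_nonneg chi_kernel_nonneg has_integral_integrable[OF chi_kernel_has_integral]) auto
qed

text \<open>\<open>g\<^sub>\<theta>\<^sub>\<theta>\<close> as a function of \<open>(\<tau>, t0)\<close>; the value \<open>0\<close> at \<open>t0 = 0\<close> is the limit
  established in \<open>g_thth_t0_tendsto\<close>.\<close>

definition g_thth_t0 :: "real \<times> real \<Rightarrow> real" where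
  "g_thth_t0 z = (if snd z = 0 then 0 else (a (snd z))\<^sup>2 * (chi a \<bar>snd z\<bar> (fst z))\<^sup>2)"

lemma isCont_g_thth_t0_nonzero:
  assumes "s0 \<noteq> 0" "\<bar>s0\<bar> < \<tau>0"
  shows "isCont g_thth_t0 (\<tau>0, s0)"
proof -
  define N where "N = {z::real \<times> real. 0 < \<bar>snd z\<bar> \<and> \<bar>snd z\<bar> < fst z}"
  have "open N" unfolding N_def by (intro open_Collect_conj open_Collect_less continuous_intros)
  moreover have "(\<tau>0, s0) \<in> N" using assms by (auto simp: N_def)
  moreover have "continuous_on N (\<lambda>z. chi a (snd (fst z, \<bar>snd z\<bar>)) (fst (fst z, \<bar>snd z\<bar>)))"
    by (rule continuous_on_compose2[OF continuous_on_chi]) (auto simp: N_def intro!: continuous_intros)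
  then have "continuous_on N (\<lambda>z. (a (snd z))\<^sup>2 * (chi a \<bar>snd z\<bar> (fst z))\<^sup>2)"
    by (intro continuous_intros) simp
  then have "continuous_on N g_thth_t0"
    by (rule continuous_on_eq) (auto simp: N_def g_thth_t0_def)
  ultimately show ?thesis using continuous_on_eq_continuous_at by blast
qed

lemma g_thth_t0_le:
  assumes "\<bar>s\<bar> \<le> c" "c < \<tau>"
  shows "g_thth_t0 (\<tau>, s) \<le> (a \<tau> / h \<tau> c * scaled_inverse_integral c \<bar>s\<bar> + a s * chi a c \<tau>)\<^sup>2"
proof (cases "s = 0")
  case False
  then have u: "0 < \<bar>s\<bar>" "\<bar>s\<bar> \<le> c" using assms by auto
  have "0 \<le> a s * chi a \<bar>s\<bar> \<tau>" using chi_bound(1)[OF u assms(2)] a_nonneg[of s] by simp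
  then have "(a s * chi a \<bar>s\<bar> \<tau>)\<^sup>2 \<le> (a \<tau> / h \<tau> c * scaled_inverse_integral c \<bar>s\<bar> + a s * chi a c \<tau>)\<^sup>2"
    using chi_bound(2)[OF u assms(2)] by (intro power_mono) (auto simp: a_abs)
  then show ?thesis using False by (simp add: g_thth_t0_def power_mult_distrib)
qed (simp add: g_thth_t0_def)

lemma isCont_chi_left: "0 < c \<Longrightarrow> c < \<tau>0 \<Longrightarrow> isCont (chi a c) \<tau>0"
proof -
  assume c: "0 < c" "c < \<tau>0"
  define W where "W = {z::real \<times> real. 0 < snd z \<and> snd z < fst z}"
  have "open W" unfolding W_def by (intro open_Collect_conj open_Collect_less continuous_intros)
  moreover have "continuous_on W (\<lambda>z. chi a (snd z) (fst z))"
    by (rule continuous_on_subset[OF continuous_on_chi]) (auto simp: W_def)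
  ultimately have "isCont (\<lambda>z. chi a (snd z) (fst z)) (\<tau>0, c)"
    using c continuous_on_eq_continuous_at[of W] by (auto simp: W_def)
  from continuous_at_compose[of \<tau>0 "\<lambda>\<tau>. (\<tau>, c)", OF _ this] show ?thesis
    by (simp add: o_def)
qed

lemma isCont_g_thth_t0_zero:
  assumes "0 < \<tau>0"
  shows "isCont g_thth_t0 (\<tau>0, 0)"
proof -
  let ?F = "at (\<tau>0, 0::real)"
  define c where "c = \<tau>0 / 2"
  have c: "0 < c" "c < \<tau>0" using assms by (auto simp: c_def)
  have \<tau>_lim: "(fst \<longlongrightarrow> \<tau>0) ?F" and s_lim: "(snd \<longlongrightarrow> 0) ?F"
    using tendsto_fst[OF tendsto_ident_at] tendsto_snd[OF tendsto_ident_at] by auto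
  have "isCont (\<lambda>z. h (fst z) (snd z)) (\<tau>0, c)"
    using continuous_on_h[of UNIV] by (simp add: continuous_on_eq_continuous_at)
  from isCont_tendsto_compose[OF this tendsto_Pair[OF \<tau>_lim tendsto_const]]
  have h_lim: "((\<lambda>z. h (fst z) c) \<longlongrightarrow> h \<tau>0 c) ?F" by simp
  define B where "B z = (a (fst z) / h (fst z) c * scaled_inverse_integral c \<bar>snd z\<bar>
    + a (snd z) * chi a c (fst z))\<^sup>2" for z
  have "(B \<longlongrightarrow> (a \<tau>0 / h \<tau>0 c * 0 + 0 * chi a c \<tau>0)\<^sup>2) ?F"
    unfolding B_def
    using h_pos[of c \<tau>0] c isCont_tendsto_compose[OF isCont_scaled_inverse_integral_abs[OF c(1)] s_lim]
      isCont_tendsto_compose[OF isCont_a s_lim] isCont_tendsto_compose[OF isCont_a \<tau>_lim]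
      isCont_tendsto_compose[OF isCont_chi_left[OF c] \<tau>_lim]
    by (intro tendsto_intros h_lim) (auto simp: scaled_inverse_integral_def a_0)
  then have B_lim: "(B \<longlongrightarrow> 0) ?F" by simp
  have "\<forall>\<^sub>F z in ?F. -c < snd z" by (rule order_tendstoD(1)[OF s_lim]) (use c in simp)
  with order_tendstoD(1)[OF \<tau>_lim c(2)] order_tendstoD(2)[OF s_lim c(1)]
  have "\<forall>\<^sub>F z in ?F. g_thth_t0 z \<le> B z"
    by eventually_elim (use g_thth_t0_le in \<open>force simp: B_def\<close>)
  moreover have "\<forall>\<^sub>F z in ?F. 0 \<le> g_thth_t0 z" by (simp add: g_thth_t0_def)
  ultimately have "(g_thth_t0 \<longlongrightarrow> 0) ?F" by (intro tendsto_sandwich[OF _ _ tendsto_const B_lim])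
  then show ?thesis by (simp add: isCont_def g_thth_t0_def)
qed

lemma isCont_g_thth_t0: "\<bar>s0\<bar> < \<tau>0 \<Longrightarrow> isCont g_thth_t0 (\<tau>0, s0)"
  using isCont_g_thth_t0_zero isCont_g_thth_t0_nonzero by (cases "s0 = 0") auto

lemma g_thth_t0_tendsto: "0 < \<tau> \<Longrightarrow> ((\<lambda>u. (a u)\<^sup>2 * (chi a \<bar>u\<bar> \<tau>)\<^sup>2) \<longlongrightarrow> 0) (at 0)"
proof -
  assume "0 < \<tau>"
  have "((\<lambda>u. g_thth_t0 (\<tau>, u)) \<longlongrightarrow> 0) (at 0)"
    using isCont_tendsto_compose[OF isCont_g_thth_t0[of 0 \<tau>] tendsto_Pair[OF tendsto_const tendsto_ident_at]]
      \<open>0 < \<tau>\<close> by (simp add: g_thth_t0_def)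
  moreover have "\<forall>\<^sub>F u in at 0. g_thth_t0 (\<tau>, u) = (a u)\<^sup>2 * (chi a \<bar>u\<bar> \<tau>)\<^sup>2"
    by (auto simp: eventually_at_filter g_thth_t0_def)
  ultimately show ?thesis using tendsto_cong by fastforce
qed

lemma g_thth_eq_g_thth_t0: "0 < \<tau> \<Longrightarrow> g_thth a \<tau> \<rho> = g_thth_t0 (\<tau>, t0 a \<tau> \<rho>)"
  using tendsto_Lim[OF trivial_limit_at g_thth_t0_tendsto]
  by (simp add: g_thth_def g_thth_t0_def Let_def)

lemma g_thth_rhoM: "0 < \<tau> \<Longrightarrow> g_thth a \<tau> (rhoM a \<tau>) = 0"
  using t0_rho_int[of 0 \<tau>] by (simp add: g_thth_eq_g_thth_t0 rhoM_eq_rho_int g_thth_t0_def)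

lemma continuous_on_g_thth: "continuous_on (D_polar a \<theta>0 \<phi>0) (\<lambda>(\<tau>, \<rho>, \<theta>, \<phi>). g_thth a \<tau> \<rho>)"
proof -
  let ?t0 = "\<lambda>x. t0 a (fst x) (fst (snd x))"
  have "continuous_on (D_polar a \<theta>0 \<phi>0) (\<lambda>x. g_thth_t0 (fst x, ?t0 x))"
  proof (rule continuous_at_imp_continuous_on, safe)
    fix \<tau> \<rho> \<theta> \<phi> assume "(\<tau>, \<rho>, \<theta>, \<phi>) \<in> D_polar a \<theta>0 \<phi>0"
    then have \<tau>: "0 < \<tau>" and \<rho>: "0 < \<rho>" "\<rho> < 2 * rho_int \<tau> 0"
      using rho_max_le[of a \<tau>] by (auto simp: D_polar_def rhoM_eq_rho_int)
    have "isCont ((\<lambda>z. t0 a (fst z) (snd z)) \<circ> (\<lambda>x. (fst x, fst (snd x)))) (\<tau>, \<rho>, \<theta>, \<phi>)"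
      by (rule continuous_at_compose) (use isCont_t0[OF \<tau> \<rho>] in \<open>auto intro!: continuous_intros\<close>)
    then have "isCont ?t0 (\<tau>, \<rho>, \<theta>, \<phi>)" by (simp add: o_def)
    moreover have "isCont g_thth_t0 (\<tau>, t0 a \<tau> \<rho>)" using isCont_g_thth_t0 t0_bounds[OF \<tau> \<rho>] by blast
    ultimately show "isCont (\<lambda>x. g_thth_t0 (fst x, ?t0 x)) (\<tau>, \<rho>, \<theta>, \<phi>)"
      by (intro continuous_at_compose[of _ "\<lambda>x. (fst x, ?t0 x)" g_thth_t0, unfolded o_def] continuous_intros) auto
  qed
  then show ?thesis by (rule continuous_on_eq) (auto simp: D_polar_def g_thth_eq_g_thth_t0)
qed

lemma continuous_on_g_phph: "continuous_on (D_polar a \<theta>0 \<phi>0) (\<lambda>(\<tau>, \<rho>, \<theta>, \<phi>). g_phph a \<tau> \<rho> \<theta>)"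
proof -
  have "continuous_on (D_polar a \<theta>0 \<phi>0)
      (\<lambda>x. (case x of (\<tau>, \<rho>, \<theta>, \<phi>) \<Rightarrow> g_thth a \<tau> \<rho>) * (sin (fst (snd (snd x))))\<^sup>2)"
    by (intro continuous_intros continuous_on_g_thth)
  then show ?thesis by (simp add: g_phph_def case_prod_beta)
qed

end

lemma even_scale_factor_if_regular:
  assumes "regular_scale_factor a" "\<And>t. a (- t) = a t"
  obtains a' a'' where "even_scale_factor a a' a''"
proof -
  from assms(1) obtain a' a'' where
    der: "\<forall>t>0. (a has_real_derivative a' t) (at t) \<and> (a' has_real_derivative a'' t) (at t)"
    and "a 0 = 0" "strict_mono_on {0..} a" "continuous_on {0..} a" "continuous_on {0<..} a''"
    and "\<forall>t>0. deriv a t \<noteq> 0"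
    unfolding regular_scale_factor_def by blast
  moreover have "deriv a t = a' t" if "t > 0" for t using der that by (blast intro: DERIV_imp_deriv)
  ultimately have "even_scale_factor a a' a''"
    using assms(2) by unfold_locales (simp_all add: der)
  then show ?thesis by (rule that)
qed

theorem corollary7p4:
  fixes a :: "real \<Rightarrow> real" and \<theta>0 \<phi>0 :: real
  assumes reg: "regular_scale_factor a"
    and even: "\<And>t. a (- t) = a t"
    and zero_cond:
      "(\<exists>L. 0 < L \<and> (deriv a \<longlongrightarrow> L) (at_right 0)) \<or>
       ((a has_real_derivative 0) (at 0) \<and>
        (\<exists>n D e. 0 < e \<and> D 0 = a \<and> D n 0 \<noteq> 0 \<and>
           (\<forall>k<n. \<forall>t. \<bar>t\<bar> < e \<and> (Suc k < n \<or> t = 0) \<longrightarrow>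
              (D k has_real_derivative D (Suc k) t) (at t))))"
  shows "continuous_on (D_polar a \<theta>0 \<phi>0) (\<lambda>(\<tau>, \<rho>, \<theta>, \<phi>). g_thth a \<tau> \<rho>)
       \<and> continuous_on (D_polar a \<theta>0 \<phi>0) (\<lambda>(\<tau>, \<rho>, \<theta>, \<phi>). g_phph a \<tau> \<rho> \<theta>)
       \<and> (\<forall>\<tau>>0. ((\<lambda>u. (a u)\<^sup>2 * (chi a \<bar>u\<bar> \<tau>)\<^sup>2) \<longlongrightarrow> 0) (at 0)
                 \<and> g_thth a \<tau> (rhoM a \<tau>) = 0
                 \<and> (\<forall>\<theta>. g_phph a \<tau> (rhoM a \<tau>) \<theta> = 0))"
proof -
  obtain a' a'' where "even_scale_factor a a' a''" using even_scale_factor_if_regular[OF reg even] .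
  then interpret even_scale_factor a a' a'' .
  show ?thesis
    using continuous_on_g_thth continuous_on_g_phph g_thth_t0_tendsto g_thth_rhoM
    by (simp add: g_phph_def)
qed

end
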